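(* Let $V$ be a real sequence with $\liminf_{n\to\infty}V_n>C>0$, fix a positive integer $m$, and let $\varphi^-$ be the subdominant solution of $(-\Delta+V)\varphi=0$. Then, with $K_A:=\sqrt{1+\left(\frac{2}{C(C+2)}\right)^2}+\frac{2}{C(C+2)}$: (a) $\left(\prod_{\ell=m}^n\frac{V_\ell+2}{K_A}\right)\varphi^-_n\in\ell^\infty$ (as a sequence in $n$); (b) if in addition $V_{n+1}-V_n\in\ell^1$, then $\left(\prod_{\ell=m}^n\frac{V_\ell+2+\sqrt{V_\ell(V_\ell+4)}}{2}\right)\varphi^-_n\in\ell^\infty$.
   Context: $(\Delta f)_n=f_{n+1}+f_{n-1}-2f_n$; $(-\Delta+V)\varphi=0$ means $-\varphi_{n+1}-\varphi_{n-1}+(2+V_n)\varphi_n=0$. The subdominant solution is a nonzero solution decreasing to $0$ at infinity (square-summable), unique up to a multiplicative constant. *)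

theory Defs
  imports "HOL-Analysis.Analysis"
begin

text \<open>Solutions of (-Delta + V) phi = 0 on the half-line: the recurrence
  -phi(n+1) - phi(n-1) + (2 + V n) phi n = 0 for all n >= 1.\<close>
definition is_solution :: "(nat \<Rightarrow> real) \<Rightarrow> (nat \<Rightarrow> real) \<Rightarrow> bool" where
  "is_solution V \<phi> \<longleftrightarrow>
     (\<forall>n\<ge>1. - \<phi> (Suc n) - \<phi> (n - 1) + (2 + V n) * \<phi> n = 0)"

definition subdominant :: "(nat \<Rightarrow> real) \<Rightarrow> (nat \<Rightarrow> real) \<Rightarrow> bool" where
  "subdominant V \<phi> \<longleftrightarrow> is_solution V \<phi> \<and> (\<exists>n. \<phi> n \<noteq> 0) \<and> summable (\<lambda>n. (\<phi> n)\<^sup>2)"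

end

theory Submission
  imports Defs
begin

text \<open>Eventually \<open>V > C > 0\<close>, so once \<open>|\<phi>|\<close> increases it keeps increasing; since a
  subdominant solution tends to 0, \<open>|\<phi>|\<close> eventually decreases, never vanishes, and the
  recurrence then yields the contraction \<open>(C + 1) |\<phi>(n+1)| \<le> |\<phi> n|\<close>. Part (a) follows from
  \<open>|(V(n+1) + 2) \<phi>(n+1)| = |\<phi>(n+2) + \<phi> n| \<le> (1 + (C + 1)\<^sup>-\<^sup>2) |\<phi> n| \<le> K |\<phi> n|\<close>.
  For (b), the ratios \<open>q n = \<phi>(n+1) / \<phi> n\<close> satisfy the Riccati equation
  \<open>q n (V(n+1) + 2 - q(n+1)) = 1\<close>, whose attracting fixed point is the recessive root \<open>\<mu>\<close> of
  \<open>x\<^sup>2 - (v + 2) x + 1\<close>. The errors \<open>|q n - \<mu>(V(n+1))|\<close> contract by the factor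
  \<open>(C + 1)\<^sup>-\<^sup>2\<close> up to \<open>|\<mu>(V(n+2)) - \<mu>(V(n+1))| = O(|V(n+2) - V(n+1)|)\<close>, hence are summable,
  and the dominant root \<open>\<lambda> = 1 / \<mu>\<close> gives \<open>\<lambda>(V(n+1)) |q n| \<le> 1 + O(error)\<close>, whose
  product stays bounded.\<close>

lemma is_solution_Suc_Suc:
  assumes "is_solution V \<phi>"
  shows "\<phi> (Suc (Suc n)) = (2 + V (Suc n)) * \<phi> (Suc n) - \<phi> n"
  using assms unfolding is_solution_def by (elim allE[of _ "Suc n"]) simp

lemma is_solution_zero_if_consecutive_zeros:
  assumes sol: "is_solution V \<phi>" and "\<phi> n = 0" and "\<phi> (Suc n) = 0"
  shows "\<phi> k = 0"
proof -
  have forward: "\<phi> (n + i) = 0 \<and> \<phi> (Suc (n + i)) = 0" for i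
    by (induction i) (use assms is_solution_Suc_Suc[OF sol, of "n + _"] in auto)
  have backward: "\<phi> (n - i) = 0 \<and> \<phi> (Suc (n - i)) = 0" if "i \<le> n" for i
    using that
  proof (induction i)
    case (Suc i)
    then have "\<phi> (Suc (n - Suc i)) = 0" "\<phi> (Suc (Suc (n - Suc i))) = 0"
      by (simp_all add: Suc_diff_Suc)
    with is_solution_Suc_Suc[OF sol, of "n - Suc i"] show ?case by simp
  qed (use assms in simp)
  show ?thesis
    using forward[of "k - n"] backward[of "n - k"] by (cases "k \<le> n") simp_all
qed

lemma is_solution_abs_increase_propagates:
  assumes sol: "is_solution V \<phi>" and "0 \<le> V (Suc n)"
    and incr: "\<bar>\<phi> n\<bar> < \<bar>\<phi> (Suc n)\<bar>"
  shows "\<bar>\<phi> (Suc n)\<bar> < \<bar>\<phi> (Suc (Suc n))\<bar>"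
proof -
  have "2 * \<bar>\<phi> (Suc n)\<bar> \<le> (2 + V (Suc n)) * \<bar>\<phi> (Suc n)\<bar>"
    using assms(2) by (intro mult_right_mono) auto
  also have "\<dots> = \<bar>\<phi> (Suc (Suc n)) + \<phi> n\<bar>"
    using assms(2) by (simp add: is_solution_Suc_Suc[OF sol] abs_mult)
  also have "\<dots> \<le> \<bar>\<phi> (Suc (Suc n))\<bar> + \<bar>\<phi> n\<bar>"
    by (rule abs_triangle_ineq)
  finally show ?thesis using incr by linarith
qed

lemma is_solution_abs_decreasing:
  assumes sol: "is_solution V \<phi>" and lim: "\<phi> \<longlonglongrightarrow> 0"
    and V_nonneg: "\<And>k. k \<ge> N \<Longrightarrow> 0 \<le> V k" and "n \<ge> N"
  shows "\<bar>\<phi> (Suc n)\<bar> \<le> \<bar>\<phi> n\<bar>"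
proof (rule ccontr)
  assume incr_at_n: "\<not> ?thesis"
  have increasing: "\<bar>\<phi> k\<bar> < \<bar>\<phi> (Suc k)\<bar>" if "k \<ge> n" for k
    using that
  proof (induction k rule: dec_induct)
    case (step k)
    then show ?case
      using is_solution_abs_increase_propagates[OF sol V_nonneg] \<open>n \<ge> N\<close> by simp
  qed (use incr_at_n in simp)
  have grows: "\<bar>\<phi> (Suc n)\<bar> \<le> \<bar>\<phi> k\<bar>" if "k \<ge> Suc n" for k
    using that
  proof (induction k rule: dec_induct)
    case (step k)
    then show ?case using increasing[of k] by simp
  qed simp
  have "\<bar>\<phi> (Suc n)\<bar> > 0"
    using incr_at_n by linarith
  moreover have "eventually (\<lambda>k. \<bar>\<phi> k\<bar> < \<bar>\<phi> (Suc n)\<bar>) sequentially"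
    using lim calculation by (intro order_tendstoD(2)[where y = 0]) (auto simp: tendsto_rabs_zero_iff)
  ultimately show False
    using grows by (metis eventually_at_top_linorder linorder_not_le nle_le)
qed

lemma is_solution_abs_contracts:
  assumes sol: "is_solution V \<phi>" and "0 \<le> C" and "C \<le> V (Suc n)"
    and decr: "\<bar>\<phi> (Suc (Suc n))\<bar> \<le> \<bar>\<phi> (Suc n)\<bar>"
  shows "(C + 1) * \<bar>\<phi> (Suc n)\<bar> \<le> \<bar>\<phi> n\<bar>"
proof -
  have "(C + 1) * \<bar>\<phi> (Suc n)\<bar> + \<bar>\<phi> (Suc n)\<bar> \<le> (2 + V (Suc n)) * \<bar>\<phi> (Suc n)\<bar>"
    using assms(3) by (simp add: algebra_simps mult_right_mono)
  also have "\<dots> = \<bar>\<phi> n + \<phi> (Suc (Suc n))\<bar>"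
    using assms(2,3) by (simp add: is_solution_Suc_Suc[OF sol] abs_mult)
  also have "\<dots> \<le> \<bar>\<phi> n\<bar> + \<bar>\<phi> (Suc (Suc n))\<bar>"
    by (rule abs_triangle_ineq)
  finally show ?thesis using decr by linarith
qed

text \<open>The roots \<open>\<lambda> \<ge> 1 \<ge> \<mu>\<close> of \<open>x\<^sup>2 - (v + 2) x + 1\<close>, the characteristic polynomial of the
  recurrence with constant potential \<open>v\<close>.\<close>
definition dominant_root :: "real \<Rightarrow> real" where
  "dominant_root v = (v + 2 + sqrt (v * (v + 4))) / 2"

definition recessive_root :: "real \<Rightarrow> real" where
  "recessive_root v = (v + 2 - sqrt (v * (v + 4))) / 2"

lemma dominant_root_add_recessive_root: "dominant_root v + recessive_root v = v + 2"
  by (simp add: dominant_root_def recessive_root_def field_simps)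

lemma dominant_root_mult_recessive_root:
  assumes "0 \<le> v"
  shows "dominant_root v * recessive_root v = 1"
proof -
  have "sqrt (v * (v + 4)) * sqrt (v * (v + 4)) = v * (v + 4)"
    using assms by simp
  then have "(v + 2 + sqrt (v * (v + 4))) * (v + 2 - sqrt (v * (v + 4))) = 4"
    by (simp add: algebra_simps)
  then show ?thesis
    by (simp add: dominant_root_def recessive_root_def)
qed

lemma one_le_dominant_root: "0 \<le> v \<Longrightarrow> 1 \<le> dominant_root v"
  by (simp add: dominant_root_def)

lemma recessive_root_eq_inverse: "0 \<le> v \<Longrightarrow> recessive_root v = 1 / dominant_root v"
  using dominant_root_mult_recessive_root[of v] one_le_dominant_root[of v]
  by (simp add: eq_divide_eq mult.commute)

lemma recessive_root_pos: "0 \<le> v \<Longrightarrow> 0 < recessive_root v"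
  using recessive_root_eq_inverse[of v] one_le_dominant_root[of v] by simp

lemma recessive_root_le_one: "0 \<le> v \<Longrightarrow> recessive_root v \<le> 1"
  using recessive_root_eq_inverse[of v] one_le_dominant_root[of v] by simp

lemma dominant_root_bounds:
  assumes "0 \<le> v"
  shows "v + 1 \<le> dominant_root v" and "dominant_root v \<le> v + 2"
  using dominant_root_add_recessive_root[of v] recessive_root_le_one[OF assms]
    recessive_root_pos[OF assms] by linarith+

lemma recessive_root_attracts:
  assumes "0 \<le> C" and "C \<le> v" and "\<bar>q'\<bar> \<le> 1" and riccati: "q * (v + 2 - q') = 1"
  shows "(C + 1)\<^sup>2 * \<bar>q - recessive_root v\<bar> \<le> \<bar>q' - recessive_root v\<bar>"
proof -
  define \<mu> where "\<mu> = recessive_root v"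
  define l where "l = dominant_root v"
  define X where "X = v + 2 - q'"
  have "C + 1 \<le> X" "C + 1 \<le> l"
    using assms dominant_root_bounds(1)[of v] unfolding X_def l_def by auto
  then have bound: "(C + 1)\<^sup>2 \<le> X * l"
    using \<open>0 \<le> C\<close> unfolding power2_eq_square by (intro mult_mono) auto
  have "(q - \<mu>) * (X * l) = q' - \<mu>"
  proof -
    have "(q - \<mu>) * (X * l) = (q * X) * l - (\<mu> * l) * X"
      by (simp add: algebra_simps)
    also have "\<dots> = l - X"
      using riccati dominant_root_mult_recessive_root[of v] assms(1,2)
      unfolding X_def l_def \<mu>_def by (simp add: mult.commute)
    also have "\<dots> = q' - \<mu>"
      using dominant_root_add_recessive_root[of v] unfolding X_def l_def \<mu>_def by simp
    finally show ?thesis .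
  qed
  moreover have "0 \<le> X * l"
    using bound by (rule order_trans[OF zero_le_power2])
  ultimately have "\<bar>q' - \<mu>\<bar> = (X * l) * \<bar>q - \<mu>\<bar>"
    by (metis abs_mult abs_of_nonneg mult.commute)
  moreover have "(C + 1)\<^sup>2 * \<bar>q - \<mu>\<bar> \<le> (X * l) * \<bar>q - \<mu>\<bar>"
    using bound by (intro mult_right_mono) auto
  ultimately show ?thesis
    unfolding \<mu>_def by simp
qed

lemma recessive_root_diff_le:
  assumes "0 \<le> C" and "C \<le> v" and "C \<le> w"
  shows "((C + 1)\<^sup>2 - 1) * \<bar>recessive_root v - recessive_root w\<bar> \<le> \<bar>v - w\<bar>"
proof -
  define a b where "a = recessive_root v" and "b = recessive_root w"
  define la lb where "la = dominant_root v" and "lb = dominant_root w"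
  have "C + 1 \<le> la" "C + 1 \<le> lb"
    using assms dominant_root_bounds(1)[of v] dominant_root_bounds(1)[of w]
    unfolding la_def lb_def by auto
  then have prod: "(C + 1)\<^sup>2 \<le> la * lb"
    using \<open>0 \<le> C\<close> unfolding power2_eq_square by (intro mult_mono) auto
  have "(a - b) * (la * lb - 1) = (a * la) * lb - (b * lb) * la - (a - b)"
    by (simp add: algebra_simps)
  also have "\<dots> = w - v"
    using assms dominant_root_mult_recessive_root[of v] dominant_root_mult_recessive_root[of w]
      dominant_root_add_recessive_root[of v] dominant_root_add_recessive_root[of w]
    unfolding a_def b_def la_def lb_def by (simp add: mult.commute)
  finally have "(a - b) * (la * lb - 1) = w - v" .
  moreover have "1 \<le> (C + 1)\<^sup>2"
    using \<open>0 \<le> C\<close> by (intro one_le_power) simp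
  ultimately have "\<bar>a - b\<bar> * (la * lb - 1) = \<bar>v - w\<bar>"
    using prod by (metis abs_minus_commute abs_mult abs_of_nonneg diff_ge_0_iff_ge order_trans)
  moreover have "((C + 1)\<^sup>2 - 1) * \<bar>a - b\<bar> \<le> (la * lb - 1) * \<bar>a - b\<bar>"
    using prod by (intro mult_right_mono) auto
  ultimately show ?thesis
    unfolding a_def b_def by (simp add: mult.commute)
qed

lemma sum_le_if_contracting:
  fixes e d :: "nat \<Rightarrow> real"
  assumes "1 < p" and e_nonneg: "\<And>n. 0 \<le> e n" and e_le: "\<And>n. n \<ge> N \<Longrightarrow> e n \<le> E"
    and contracts: "\<And>n. n \<ge> N \<Longrightarrow> p * e n \<le> e (Suc n) + d n"
    and d_sum: "\<And>k. (\<Sum>n\<in>{N..<k}. d n) \<le> D"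
  shows "(\<Sum>n\<in>{N..<k}. e n) \<le> (E + D) / (p - 1)"
proof (cases "N \<le> k")
  case True
  have "(p - 1) * (\<Sum>n\<in>{N..<k}. e n) + e N \<le> e k + (\<Sum>n\<in>{N..<k}. d n)"
    using True
  proof (induction k rule: dec_induct)
    case (step k)
    then show ?case
      using contracts[OF step(1)] by (simp add: algebra_simps)
  qed simp
  then have "(p - 1) * (\<Sum>n\<in>{N..<k}. e n) \<le> E + D"
    using e_le[OF True] e_nonneg[of N] d_sum[of k] by linarith
  then show ?thesis
    using \<open>1 < p\<close> by (simp add: le_divide_eq mult.commute)
next
  case False
  then show ?thesis
    using e_le[of N] e_nonneg[of N] d_sum[of N] \<open>1 < p\<close> by simp
qed

lemma Bseq_if_bounded_growth:
  fixes f g :: "nat \<Rightarrow> real"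
  assumes growth: "\<And>n. n \<ge> N \<Longrightarrow> \<bar>f (Suc n)\<bar> \<le> exp (g n) * \<bar>f n\<bar>"
    and g_sum: "\<And>k. (\<Sum>i\<in>{N..<k}. g i) \<le> B"
  shows "Bseq f"
proof -
  have tail: "\<bar>f n\<bar> \<le> \<bar>f N\<bar> * exp (\<Sum>i\<in>{N..<n}. g i)" if "n \<ge> N" for n
    using that
  proof (induction n rule: dec_induct)
    case (step n)
    have "\<bar>f (Suc n)\<bar> \<le> exp (g n) * \<bar>f n\<bar>"
      using growth[OF step(1)] .
    also have "\<dots> \<le> exp (g n) * (\<bar>f N\<bar> * exp (\<Sum>i\<in>{N..<n}. g i))"
      using step(3) by (intro mult_left_mono) simp_all
    finally show ?case
      using step(1) by (simp add: exp_add sum.atLeastLessThan_Suc algebra_simps)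
  qed simp
  define M where "M = max (Max ((\<lambda>n. \<bar>f n\<bar>) ` {..N})) (\<bar>f N\<bar> * exp B)"
  have "\<bar>f n\<bar> \<le> M" for n
  proof (cases "n \<le> N")
    case True
    then show ?thesis unfolding M_def by (intro max.coboundedI1 Max_ge) auto
  next
    case False
    then have "\<bar>f n\<bar> \<le> \<bar>f N\<bar> * exp (\<Sum>i\<in>{N..<n}. g i)"
      by (intro tail) simp
    also have "\<dots> \<le> \<bar>f N\<bar> * exp B"
      using g_sum[of n] by (intro mult_left_mono) simp_all
    finally show ?thesis unfolding M_def by simp
  qed
  then show ?thesis by (intro BseqI'[of _ M]) simp
qed

lemma Bseq_prod_mult_if_bounded_growth:
  fixes a f g :: "nat \<Rightarrow> real"
  assumes "m \<le> N"
    and growth: "\<And>n. n \<ge> N \<Longrightarrow> \<bar>a (Suc n) * f (Suc n)\<bar> \<le> exp (g n) * \<bar>f n\<bar>"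
    and g_sum: "\<And>k. (\<Sum>i\<in>{N..<k}. g i) \<le> B"
  shows "Bseq (\<lambda>n. (\<Prod>l=m..n. a l) * f n)"
proof (rule Bseq_if_bounded_growth[OF _ g_sum])
  fix n assume "n \<ge> N"
  then have "(\<Prod>l=m..Suc n. a l) = (\<Prod>l=m..n. a l) * a (Suc n)"
    using \<open>m \<le> N\<close> by simp
  then have "\<bar>(\<Prod>l=m..Suc n. a l) * f (Suc n)\<bar> = \<bar>\<Prod>l=m..n. a l\<bar> * \<bar>a (Suc n) * f (Suc n)\<bar>"
    by (simp add: abs_mult)
  also have "\<dots> \<le> \<bar>\<Prod>l=m..n. a l\<bar> * (exp (g n) * \<bar>f n\<bar>)"
    using growth[OF \<open>n \<ge> N\<close>] by (intro mult_left_mono) auto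
  finally show "\<bar>(\<Prod>l=m..Suc n. a l) * f (Suc n)\<bar> \<le> exp (g n) * \<bar>(\<Prod>l=m..n. a l) * f n\<bar>"
    by (simp add: abs_mult mult_ac)
qed

lemma Bseq_if_summable_abs_diff:
  fixes V :: "nat \<Rightarrow> real"
  assumes "summable (\<lambda>n. \<bar>V (Suc n) - V n\<bar>)"
  shows "Bseq V"
proof -
  have "summable (\<lambda>n. V (Suc n) - V n)"
    using assms by (auto intro: summable_norm_cancel)
  then have "(\<lambda>n. V 0 + (\<Sum>i<n. V (Suc i) - V i)) \<longlonglongrightarrow> V 0 + (\<Sum>i. V (Suc i) - V i)"
    by (rule tendsto_add[OF tendsto_const summable_LIMSEQ])
  moreover have "(\<lambda>n. V 0 + (\<Sum>i<n. V (Suc i) - V i)) = V"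
    by (simp add: sum_lessThan_telescope)
  ultimately have "convergent V"
    by (metis convergentI)
  then show ?thesis by (rule convergent_imp_Bseq)
qed

lemma subdominant_LIMSEQ_zero:
  assumes "subdominant V \<phi>"
  shows "\<phi> \<longlonglongrightarrow> 0"
proof -
  have "(\<lambda>n. sqrt ((\<phi> n)\<^sup>2)) \<longlonglongrightarrow> sqrt 0"
    using assms unfolding subdominant_def by (intro tendsto_real_sqrt summable_LIMSEQ_zero) simp
  then show ?thesis
    by (simp add: tendsto_rabs_zero_iff)
qed

lemma subdominant_abs_decreasing_nonzero:
  assumes sub: "subdominant V \<phi>" and V_nonneg: "\<And>k. k \<ge> N \<Longrightarrow> 0 \<le> V k" and "n \<ge> N"
  shows "\<bar>\<phi> (Suc n)\<bar> \<le> \<bar>\<phi> n\<bar>" and "\<phi> n \<noteq> 0"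
proof -
  have sol: "is_solution V \<phi>"
    using sub unfolding subdominant_def by simp
  show decr: "\<bar>\<phi> (Suc n)\<bar> \<le> \<bar>\<phi> n\<bar>"
    using is_solution_abs_decreasing[OF sol subdominant_LIMSEQ_zero[OF sub] V_nonneg \<open>n \<ge> N\<close>] .
  show "\<phi> n \<noteq> 0"
  proof
    assume "\<phi> n = 0"
    with decr have "\<phi> (Suc n) = 0" by simp
    with \<open>\<phi> n = 0\<close> have "\<phi> k = 0" for k
      by (rule is_solution_zero_if_consecutive_zeros[OF sol])
    with sub show False unfolding subdominant_def by simp
  qed
qed

lemma Bseq_prod_div_mult_solution:
  assumes sol: "is_solution V \<phi>" and "0 \<le> C" and "m \<le> N"
    and V_ge: "\<And>n. n \<ge> N \<Longrightarrow> C \<le> V n"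
    and decr: "\<And>n. n \<ge> N \<Longrightarrow> \<bar>\<phi> (Suc n)\<bar> \<le> \<bar>\<phi> n\<bar>"
    and K: "1 + 1 / (C + 1)\<^sup>2 \<le> K"
  shows "Bseq (\<lambda>n. (\<Prod>l=m..n. (V l + 2) / K) * \<phi> n)"
proof (rule Bseq_prod_mult_if_bounded_growth[where g = "\<lambda>_. 0" and B = 0, OF \<open>m \<le> N\<close>])
  fix n assume "n \<ge> N"
  have contracts: "(C + 1) * \<bar>\<phi> (Suc k)\<bar> \<le> \<bar>\<phi> k\<bar>" if "k \<ge> N" for k
    using that by (intro is_solution_abs_contracts[OF sol \<open>0 \<le> C\<close>] V_ge decr) simp_all
  have "(C + 1)\<^sup>2 * \<bar>\<phi> (Suc (Suc n))\<bar> \<le> (C + 1) * \<bar>\<phi> (Suc n)\<bar>"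
    unfolding power2_eq_square mult.assoc
    using contracts[of "Suc n"] \<open>n \<ge> N\<close> \<open>0 \<le> C\<close> by (intro mult_left_mono) simp_all
  also have "\<dots> \<le> \<bar>\<phi> n\<bar>"
    using contracts[OF \<open>n \<ge> N\<close>] .
  finally have "\<bar>\<phi> (Suc (Suc n))\<bar> \<le> \<bar>\<phi> n\<bar> / (C + 1)\<^sup>2"
    using \<open>0 \<le> C\<close> by (simp add: le_divide_eq mult.commute)
  then have "\<bar>\<phi> n + \<phi> (Suc (Suc n))\<bar> \<le> (1 + 1 / (C + 1)\<^sup>2) * \<bar>\<phi> n\<bar>"
    by (simp add: algebra_simps add_mono abs_triangle_ineq order_trans)
  also have "\<dots> \<le> K * \<bar>\<phi> n\<bar>"
    using K by (intro mult_right_mono) simp_all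
  finally have "\<bar>(V (Suc n) + 2) * \<phi> (Suc n)\<bar> \<le> K * \<bar>\<phi> n\<bar>"
    by (simp add: is_solution_Suc_Suc[OF sol] algebra_simps)
  moreover have "0 < K"
    using K by (smt (verit) zero_le_divide_1_iff zero_le_power2)
  ultimately show "\<bar>(V (Suc n) + 2) / K * \<phi> (Suc n)\<bar> \<le> exp 0 * \<bar>\<phi> n\<bar>"
    by (simp add: abs_mult divide_le_eq mult.commute)
qed simp

lemma is_solution_ratio_riccati:
  assumes sol: "is_solution V \<phi>" and "\<phi> n \<noteq> 0" and "\<phi> (Suc n) \<noteq> 0"
  shows "\<phi> (Suc n) / \<phi> n * (V (Suc n) + 2 - \<phi> (Suc (Suc n)) / \<phi> (Suc n)) = 1"
  using assms(2,3) by (simp add: is_solution_Suc_Suc[OF sol] field_simps)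

lemma ratio_error_sum_bounded:
  assumes sol: "is_solution V \<phi>" and "0 < C"
    and V_ge: "\<And>n. n \<ge> N \<Longrightarrow> C \<le> V n"
    and nonzero: "\<And>n. n \<ge> N \<Longrightarrow> \<phi> n \<noteq> 0"
    and decr: "\<And>n. n \<ge> N \<Longrightarrow> \<bar>\<phi> (Suc n)\<bar> \<le> \<bar>\<phi> n\<bar>"
    and V_diff: "summable (\<lambda>n. \<bar>V (Suc n) - V n\<bar>)"
  obtains B where "\<And>k. (\<Sum>n\<in>{N..<k}. \<bar>\<phi> (Suc n) / \<phi> n - recessive_root (V (Suc n))\<bar>) \<le> B"
proof -
  define q where "q n = \<phi> (Suc n) / \<phi> n" for n
  define e where "e n = \<bar>q n - recessive_root (V (Suc n))\<bar>" for n
  define d where "d n = \<bar>recessive_root (V (Suc (Suc n))) - recessive_root (V (Suc n))\<bar>" for n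
  define p where "p = (C + 1)\<^sup>2"
  define T where "T = (\<Sum>n. \<bar>V (Suc (Suc n)) - V (Suc n)\<bar>)"
  have "1 < p"
    using \<open>0 < C\<close> unfolding p_def by (intro one_less_power) auto
  have V_nonneg: "0 \<le> V n" if "n \<ge> N" for n
    using V_ge[OF that] \<open>0 < C\<close> by simp
  have q_le: "\<bar>q n\<bar> \<le> 1" if "n \<ge> N" for n
    using decr[OF that] nonzero[OF that] unfolding q_def by (simp add: abs_divide)
  have "e n \<le> 2" if "n \<ge> N" for n
    using q_le[OF that] recessive_root_pos[of "V (Suc n)"] recessive_root_le_one[of "V (Suc n)"]
      V_nonneg[of "Suc n"] that unfolding e_def by auto
  moreover have "p * e n \<le> e (Suc n) + d n" if "n \<ge> N" for n
  proof -
    have "p * e n \<le> \<bar>q (Suc n) - recessive_root (V (Suc n))\<bar>"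
      unfolding p_def e_def q_def
      using that \<open>0 < C\<close> V_ge[of "Suc n"] q_le[of "Suc n"] nonzero[of n] nonzero[of "Suc n"]
      by (intro recessive_root_attracts is_solution_ratio_riccati[OF sol]) (simp_all add: q_def)
    then show ?thesis
      unfolding e_def d_def by linarith
  qed
  moreover have "(\<Sum>n\<in>{N..<k}. d n) \<le> T / (p - 1)" for k
  proof -
    have summable: "summable (\<lambda>n. \<bar>V (Suc (Suc n)) - V (Suc n)\<bar>)"
      using V_diff by (subst summable_Suc_iff[where f = "\<lambda>n. \<bar>V (Suc n) - V n\<bar>"])
    have "(p - 1) * (\<Sum>n\<in>{N..<k}. d n) = (\<Sum>n\<in>{N..<k}. (p - 1) * d n)"
      by (simp add: sum_distrib_left)
    also have "\<dots> \<le> (\<Sum>n\<in>{N..<k}. \<bar>V (Suc (Suc n)) - V (Suc n)\<bar>)"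
      unfolding p_def d_def using \<open>0 < C\<close> V_ge
      by (intro sum_mono recessive_root_diff_le) simp_all
    also have "\<dots> \<le> T"
      unfolding T_def by (rule sum_le_suminf[OF summable]) auto
    finally show ?thesis
      using \<open>1 < p\<close> by (simp add: le_divide_eq mult.commute)
  qed
  ultimately have "(\<Sum>n\<in>{N..<k}. e n) \<le> (2 + T / (p - 1)) / (p - 1)" for k
    using \<open>1 < p\<close> by (intro sum_le_if_contracting) (simp_all add: e_def)
  then show ?thesis
    using that unfolding e_def q_def by blast
qed

lemma Bseq_dominant_root_prod_mult_solution:
  assumes sol: "is_solution V \<phi>" and "0 < C" and "m \<le> N"
    and V_ge: "\<And>n. n \<ge> N \<Longrightarrow> C \<le> V n"
    and nonzero: "\<And>n. n \<ge> N \<Longrightarrow> \<phi> n \<noteq> 0"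
    and decr: "\<And>n. n \<ge> N \<Longrightarrow> \<bar>\<phi> (Suc n)\<bar> \<le> \<bar>\<phi> n\<bar>"
    and V_diff: "summable (\<lambda>n. \<bar>V (Suc n) - V n\<bar>)"
  shows "Bseq (\<lambda>n. (\<Prod>l=m..n. dominant_root (V l)) * \<phi> n)"
proof -
  define e where "e n = \<bar>\<phi> (Suc n) / \<phi> n - recessive_root (V (Suc n))\<bar>" for n
  obtain B where B: "\<And>k. (\<Sum>n\<in>{N..<k}. e n) \<le> B"
    using ratio_error_sum_bounded[OF assms(1,2,4-7)] unfolding e_def by blast
  obtain L where L: "\<And>n. \<bar>V n\<bar> \<le> L"
    using Bseq_if_summable_abs_diff[OF V_diff] unfolding Bseq_def by auto
  have V_nonneg: "0 \<le> V n" if "n \<ge> N" for n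
    using V_ge[OF that] \<open>0 < C\<close> by simp
  show ?thesis
  proof (rule Bseq_prod_mult_if_bounded_growth[where g = "\<lambda>n. (L + 2) * e n", OF \<open>m \<le> N\<close>])
    show "(\<Sum>n\<in>{N..<k}. (L + 2) * e n) \<le> (L + 2) * B" for k
      using B[of k] L[of 0] by (simp add: sum_distrib_left[symmetric] mult_left_mono)
  next
    fix n assume "n \<ge> N"
    define \<mu> \<Lambda> where "\<mu> = recessive_root (V (Suc n))" and "\<Lambda> = dominant_root (V (Suc n))"
    have "0 \<le> V (Suc n)"
      using V_nonneg \<open>n \<ge> N\<close> by simp
    then have "1 \<le> \<Lambda>" "\<Lambda> \<le> L + 2" "\<Lambda> * \<mu> = 1" "0 < \<mu>"
      using one_le_dominant_root dominant_root_bounds(2) L[of "Suc n"] recessive_root_pos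
        dominant_root_mult_recessive_root unfolding \<Lambda>_def \<mu>_def by force+
    have "\<bar>\<phi> (Suc n) / \<phi> n\<bar> \<le> \<mu> + e n"
      using \<open>0 < \<mu>\<close> unfolding e_def \<mu>_def by linarith
    then have "\<Lambda> * \<bar>\<phi> (Suc n) / \<phi> n\<bar> \<le> \<Lambda> * (\<mu> + e n)"
      by (rule mult_left_mono) (use \<open>1 \<le> \<Lambda>\<close> in simp)
    also have "\<dots> = 1 + \<Lambda> * e n"
      using \<open>\<Lambda> * \<mu> = 1\<close> by (simp add: distrib_left)
    also have "\<dots> \<le> 1 + (L + 2) * e n"
      using \<open>\<Lambda> \<le> L + 2\<close> by (simp add: e_def mult_right_mono)
    also have "\<dots> \<le> exp ((L + 2) * e n)"
      by (rule exp_ge_add_one_self[THEN order.trans[rotated]]) simp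
    finally have "\<Lambda> * \<bar>\<phi> (Suc n) / \<phi> n\<bar> \<le> exp ((L + 2) * e n)" .
    then show "\<bar>dominant_root (V (Suc n)) * \<phi> (Suc n)\<bar> \<le> exp ((L + 2) * e n) * \<bar>\<phi> n\<bar>"
      using nonzero[OF \<open>n \<ge> N\<close>] \<open>1 \<le> \<Lambda>\<close> unfolding \<Lambda>_def
      by (simp add: abs_mult abs_divide divide_le_eq)
  qed
qed

text \<open>The constant \<open>K\<close> of part (a) enters only through this bound.\<close>
lemma one_add_inverse_square_le:
  fixes C :: real
  assumes "0 < C"
  shows "1 + 1 / (C + 1)\<^sup>2 \<le> sqrt (1 + (2 / (C * (C + 2)))\<^sup>2) + 2 / (C * (C + 2))"
proof -
  have "C * (C + 2) \<le> 2 * (C + 1)\<^sup>2"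
    using assms zero_le_square[of C] by (simp add: power2_eq_square algebra_simps)
  then have "1 / (C + 1)\<^sup>2 \<le> 2 / (C * (C + 2))"
    using assms by (simp add: divide_simps)
  moreover have "1 \<le> sqrt (1 + (2 / (C * (C + 2)))\<^sup>2)"
    by simp
  ultimately show ?thesis by linarith
qed

theorem corollary5:
  fixes V \<phi> :: "nat \<Rightarrow> real" and C :: real and m :: nat
  assumes "0 < C"
    and "ereal C < liminf (\<lambda>n. ereal (V n))"
    and "m \<ge> 1"
    and "subdominant V \<phi>"
  defines "K \<equiv> sqrt (1 + (2 / (C * (C + 2)))\<^sup>2) + 2 / (C * (C + 2))"
  shows "Bseq (\<lambda>n. (\<Prod>l=m..n. (V l + 2) / K) * \<phi> n) \<and>
         (summable (\<lambda>n. \<bar>V (Suc n) - V n\<bar>) \<longrightarrow>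
         Bseq (\<lambda>n. (\<Prod>l=m..n. (V l + 2 + sqrt (V l * (V l + 4))) / 2) * \<phi> n))"
proof -
  obtain N0 where N0: "\<And>n. n \<ge> N0 \<Longrightarrow> C < V n"
    using less_LiminfD[OF assms(2)] by (auto simp: eventually_sequentially)
  define N where "N = max N0 m"
  have V_ge: "C \<le> V n" if "n \<ge> N" for n
    using N0[of n] that unfolding N_def by simp
  with \<open>0 < C\<close> have V_nonneg: "0 \<le> V n" if "n \<ge> N" for n
    using that by force
  have sol: "is_solution V \<phi>"
    using assms(4) unfolding subdominant_def by simp
  note decr = subdominant_abs_decreasing_nonzero(1)[OF assms(4) V_nonneg]
  note nonzero = subdominant_abs_decreasing_nonzero(2)[OF assms(4) V_nonneg]
  have "m \<le> N" unfolding N_def by simp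
  have "Bseq (\<lambda>n. (\<Prod>l=m..n. (V l + 2) / K) * \<phi> n)"
    using Bseq_prod_div_mult_solution[OF sol _ \<open>m \<le> N\<close> V_ge decr]
      one_add_inverse_square_le[OF \<open>0 < C\<close>] \<open>0 < C\<close> unfolding K_def by simp
  moreover have "Bseq (\<lambda>n. (\<Prod>l=m..n. (V l + 2 + sqrt (V l * (V l + 4))) / 2) * \<phi> n)"
    if "summable (\<lambda>n. \<bar>V (Suc n) - V n\<bar>)"
    using Bseq_dominant_root_prod_mult_solution[OF sol \<open>0 < C\<close> \<open>m \<le> N\<close> V_ge nonzero decr that]
    unfolding dominant_root_def .
  ultimately show ?thesis by blast
qed

end
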